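(* Let $G$ be a profinite group satisfying the maximum condition on closed subgroups. The following are equivalent: (i) every isolated orbital closed subgroup of $G$ is normal in $G$; (ii) every orbital closed subgroup $K$ of $G$ contains a subgroup $N$ of finite index in $K$ which is normal in $G$.
   Context: A closed subgroup $K$ of a profinite group $G$ is orbital if $\mathbf{N}_G(K)$ is open in $G$. An orbital closed subgroup $H$ is isolated orbital if for every orbital closed subgroup $H'$ of $G$ with $H\lneq H'\le G$ we have $[H':H]=\infty$. *)

theory Defs
  imports "HOL-Analysis.Analysis" "HOL-Algebra.Algebra"
begin

definition topological_group :: "('a, 'b) monoid_scheme \<Rightarrow> 'a topology \<Rightarrow> bool" where
  "topological_group G T \<longleftrightarrow> group G \<and> topspace T = carrier G \<and>
     continuous_map (prod_topology T T) T (\<lambda>(x, y). x \<otimes>\<^bsub>G\<^esub> y) \<and>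
     continuous_map T T (\<lambda>x. inv\<^bsub>G\<^esub> x)"

definition profinite_group :: "('a, 'b) monoid_scheme \<Rightarrow> 'a topology \<Rightarrow> bool" where
  "profinite_group G T \<longleftrightarrow> topological_group G T \<and> compact_space T \<and> Hausdorff_space T \<and>
     (\<forall>x \<in> topspace T. connected_component_of_set T x = {x})"

definition closed_subgroup :: "('a, 'b) monoid_scheme \<Rightarrow> 'a topology \<Rightarrow> 'a set \<Rightarrow> bool" where
  "closed_subgroup G T K \<longleftrightarrow> subgroup K G \<and> closedin T K"

definition max_closed_subgroups :: "('a, 'b) monoid_scheme \<Rightarrow> 'a topology \<Rightarrow> bool" where
  "max_closed_subgroups G T \<longleftrightarrow>
     (\<forall>S. S \<noteq> {} \<and> (\<forall>K \<in> S. closed_subgroup G T K) \<longrightarrow>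
          (\<exists>M \<in> S. \<forall>K \<in> S. M \<subseteq> K \<longrightarrow> K = M))"

text \<open>Index [H' : H] is finite, for H \<subseteq> H': finitely many right cosets of H meet H'.\<close>
definition finite_index_in :: "('a, 'b) monoid_scheme \<Rightarrow> 'a set \<Rightarrow> 'a set \<Rightarrow> bool" where
  "finite_index_in G H H' \<longleftrightarrow> finite ((\<lambda>h. H #>\<^bsub>G\<^esub> h) ` H')"

definition orbital :: "('a, 'b) monoid_scheme \<Rightarrow> 'a topology \<Rightarrow> 'a set \<Rightarrow> bool" where
  "orbital G T K \<longleftrightarrow> closed_subgroup G T K \<and> openin T (normalizer G K)"

definition isolated_orbital :: "('a, 'b) monoid_scheme \<Rightarrow> 'a topology \<Rightarrow> 'a set \<Rightarrow> bool" where
  "isolated_orbital G T H \<longleftrightarrow> orbital G T H \<and>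
     (\<forall>H'. orbital G T H' \<and> H \<subset> H' \<longrightarrow> \<not> finite_index_in G H H')"

end

theory Submission
  imports Defs
begin

text \<open>(i) \<Longrightarrow> (ii): by the maximum condition an orbital \<open>K\<close> lies with finite index in a
  maximal orbital overgroup \<open>M\<close> among those containing \<open>K\<close> with finite index; such an \<open>M\<close>
  is isolated, hence normal by (i). The normalizer of \<open>K\<close> is open in the compact group, so
  \<open>K\<close> has finitely many conjugates, each of finite index in \<open>M = M\<^sup>g\<close>; their intersection,
  the normal core of \<open>K\<close>, is normal and of finite index in \<open>M\<close>, hence in \<open>K\<close>.

  (ii) \<Longrightarrow> (i): for an isolated orbital \<open>H\<close> choose \<open>N \<lhd> G\<close> of finite index in \<open>H\<close>. Modulo
  \<open>N\<close> the finitely many conjugates of \<open>H\<close> are finite subgroups, so by Dietzmann's lemma the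
  normal closure of \<open>H\<close> is finite modulo \<open>N\<close>. It is therefore a normal overgroup of \<open>H\<close> of
  finite index, closed as a finite union of cosets of \<open>H\<close>, hence orbital; isolation forces it
  to be \<open>H\<close>.\<close>

definition word_prod :: "('a, 'b) monoid_scheme \<Rightarrow> 'a list \<Rightarrow> 'a" where
  "word_prod G w = foldr (\<lambda>x y. x \<otimes>\<^bsub>G\<^esub> y) w \<one>\<^bsub>G\<^esub>"

context group begin

lemma word_prod_simps [simp]:
  "word_prod G [] = \<one>" "word_prod G (a # w) = a \<otimes> word_prod G w"
  by (simp_all add: word_prod_def)

lemma word_prod_closed [simp]: "set w \<subseteq> carrier G \<Longrightarrow> word_prod G w \<in> carrier G"
  by (induction w) auto

lemma word_prod_append:
  "set v \<subseteq> carrier G \<Longrightarrow> set w \<subseteq> carrier G \<Longrightarrow> word_prod G (v @ w) = word_prod G v \<otimes> word_prod G w"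
  by (induction v) (auto simp: m_assoc)

lemma word_prod_replicate: "s \<in> carrier G \<Longrightarrow> word_prod G (replicate n s) = s [^] n"
  by (induction n) (simp_all flip: nat_pow_Suc2)

lemma generate_imp_word_prod:
  assumes S: "S \<subseteq> carrier G" and torsion: "\<And>s. s \<in> S \<Longrightarrow> \<exists>n>0. s [^] (n::nat) = \<one>"
  shows "x \<in> generate G S \<Longrightarrow> \<exists>w. set w \<subseteq> S \<and> x = word_prod G w"
proof (induction rule: generate.induct)
  case one
  show ?case by (intro exI[of _ "[]"]) simp
next
  case (incl h)
  then show ?case using S by (intro exI[of _ "[h]"]) auto
next
  case (inv h)
  then obtain n :: nat where n: "n > 0" "h [^] n = \<one>" using torsion by blast
  have h: "h \<in> carrier G" using inv S by auto
  have "h [^] (n - 1) \<otimes> h = h [^] n"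
    using h n(1) nat_pow_mult[of h "n - 1" 1] by simp
  then have "inv h = word_prod G (replicate (n - 1) h)"
    using h n(2) by (simp add: inv_equality word_prod_replicate)
  then show ?case using inv by (intro exI[of _ "replicate (n - 1) h"]) auto
next
  case (eng h1 h2)
  then obtain v w where "set v \<subseteq> S" "h1 = word_prod G v" "set w \<subseteq> S" "h2 = word_prod G w"
    by blast
  then show ?case using S by (intro exI[of _ "v @ w"]) (auto simp: word_prod_append)
qed

lemma word_prod_collect_letter:
  assumes S: "S \<subseteq> carrier G" and conj: "\<And>g s. g \<in> carrier G \<Longrightarrow> s \<in> S \<Longrightarrow> g \<otimes> s \<otimes> inv g \<in> S"
    and s: "s \<in> S"
  shows "set w \<subseteq> S \<Longrightarrow> \<exists>w'. set w' \<subseteq> S \<and> length w' + count_list w s = length w \<and>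
           word_prod G w = s [^] count_list w s \<otimes> word_prod G w'"
proof (induction w)
  case Nil
  show ?case by (intro exI[of _ "[]"]) auto
next
  case (Cons a w)
  then obtain w' where w': "set w' \<subseteq> S" "length w' + count_list w s = length w"
     "word_prod G w = s [^] count_list w s \<otimes> word_prod G w'" by auto
  have a: "a \<in> S" "a \<in> carrier G" and sc: "s \<in> carrier G" and w'c: "set w' \<subseteq> carrier G"
    using Cons.prems S s w'(1) by auto
  show ?case
  proof (cases "a = s")
    case True
    then show ?thesis using w' sc w'c
      by (intro exI[of _ w']) (auto simp: m_assoc[symmetric] nat_pow_Suc2[symmetric])
  next
    case False
    let ?p = "s [^] count_list w s"
    define b where "b = inv ?p \<otimes> a \<otimes> inv (inv ?p)"
    have "b \<in> S" unfolding b_def using a sc by (intro conj) auto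
    moreover have "word_prod G (a # w) = ?p \<otimes> (b \<otimes> word_prod G w')"
      unfolding b_def using w' a sc w'c by (simp add: m_assoc[symmetric])
    ultimately show ?thesis using False w' by (intro exI[of _ "b # w'"]) auto
  qed
qed

lemma word_prod_shorten:
  assumes S: "S \<subseteq> carrier G" and conj: "\<And>g s. g \<in> carrier G \<Longrightarrow> s \<in> S \<Longrightarrow> g \<otimes> s \<otimes> inv g \<in> S"
    and s: "s \<in> S" and w: "set w \<subseteq> S"
    and n: "n > 0" "s [^] (n::nat) = \<one>" "n \<le> count_list w s"
  shows "\<exists>v. set v \<subseteq> S \<and> word_prod G v = word_prod G w \<and> length v < length w"
proof -
  obtain w' where w': "set w' \<subseteq> S" "length w' + count_list w s = length w"
    "word_prod G w = s [^] count_list w s \<otimes> word_prod G w'"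
    using word_prod_collect_letter[OF S conj s w] by blast
  have sc: "s \<in> carrier G" and w'c: "set w' \<subseteq> carrier G" using s w'(1) S by auto
  let ?v = "replicate (count_list w s - n) s @ w'"
  have "s [^] count_list w s = s [^] (count_list w s - n) \<otimes> s [^] n"
    using n(3) sc by (simp add: nat_pow_mult)
  then have "s [^] count_list w s = s [^] (count_list w s - n)" using n(2) sc by simp
  moreover have "set (replicate (count_list w s - n) s) \<subseteq> carrier G" using sc by auto
  ultimately have "word_prod G ?v = word_prod G w"
    using w' w'c sc by (simp add: word_prod_append word_prod_replicate)
  moreover have "set ?v \<subseteq> S" using w' s by auto
  moreover have "length ?v < length w" using w'(2) n by auto
  ultimately show ?thesis by blast
qed

text \<open>Dietzmann's lemma. In a shortest word for an element of \<open>generate G S\<close> each letter \<open>s\<close>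
  occurs fewer than \<open>ord s\<close> times, so these words have bounded length.\<close>
theorem dietzmann:
  assumes S: "S \<subseteq> carrier G" and fin: "finite S"
    and torsion: "\<And>s. s \<in> S \<Longrightarrow> \<exists>n>0. s [^] (n::nat) = \<one>"
    and conj: "\<And>g s. g \<in> carrier G \<Longrightarrow> s \<in> S \<Longrightarrow> g \<otimes> s \<otimes> inv g \<in> S"
  shows "finite (generate G S)"
proof -
  have ord: "ord s > 0" "s [^] ord s = \<one>" if "s \<in> S" for s
    using torsion[OF that] that S ord_eq_0[of s] by auto
  define B where "B = sum ord S"
  have "\<exists>w. set w \<subseteq> S \<and> x = word_prod G w \<and> length w \<le> B" if x: "x \<in> generate G S" for x
  proof -
    define words where "words = {w. set w \<subseteq> S \<and> x = word_prod G w}"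
    have "words \<noteq> {}" using generate_imp_word_prod[OF S torsion x] unfolding words_def by blast
    then obtain w where w: "w \<in> words" and min: "\<And>v. v \<in> words \<Longrightarrow> length w \<le> length v"
      using arg_min_nat_lemma[of "\<lambda>w. w \<in> words" _ length] by (metis ex_in_conv)
    have "count_list w s < ord s" if s: "s \<in> S" for s
    proof (rule ccontr)
      assume "\<not> count_list w s < ord s"
      then have "ord s \<le> count_list w s" by simp
      moreover have "set w \<subseteq> S" using w unfolding words_def by simp
      ultimately obtain v where "set v \<subseteq> S" "word_prod G v = word_prod G w" "length v < length w"
        using word_prod_shorten[OF S conj s _ ord[OF s]] by blast
      then show False using min[of v] w unfolding words_def by auto
    qed
    then have "length w \<le> B"
      unfolding B_def using sum_count_set[of w S] w fin unfolding words_def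
      by (metis (no_types, lifting) less_imp_le mem_Collect_eq sum_mono)
    then show ?thesis using w unfolding words_def by blast
  qed
  then have "generate G S \<subseteq> word_prod G ` {w. set w \<subseteq> S \<and> length w \<le> B}" by blast
  then show ?thesis using finite_lists_length_le[OF fin] finite_subset by blast
qed

end

lemma finite_index_in_subset:
  assumes "finite_index_in G K H" and "H' \<subseteq> H" shows "finite_index_in G K H'"
  using finite_subset[OF image_mono[OF assms(2)]] assms(1) unfolding finite_index_in_def by blast

context group begin

lemma finite_index_in_refl:
  assumes "subgroup K G" shows "finite_index_in G K K"
proof -
  have "(\<lambda>h. K #> h) ` K \<subseteq> {K}" using coset_join2[OF subgroup.mem_carrier[OF assms] assms] by auto
  then show ?thesis unfolding finite_index_in_def by (rule finite_subset) simp
qed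

lemma finite_index_in_trans:
  assumes K: "K \<subseteq> carrier G" and H: "subgroup H G" and H': "subgroup H' G"
    and KH: "finite_index_in G K H" and HH': "finite_index_in G H H'"
  shows "finite_index_in G K H'"
proof -
  define rep where "rep R = (SOME r. r \<in> H' \<and> H #> r = R)" for R
  have cover: "(\<lambda>x. K #> x) ` H' \<subseteq> (\<lambda>(Z, R). Z #> rep R) ` ((\<lambda>h. K #> h) ` H \<times> (\<lambda>x. H #> x) ` H')"
  proof
    fix Y assume "Y \<in> (\<lambda>x. K #> x) ` H'"
    then obtain x where x: "x \<in> H'" "Y = K #> x" by auto
    define r where "r = rep (H #> x)"
    have r: "r \<in> H'" "H #> r = H #> x"
      unfolding r_def rep_def by (rule someI2[of _ x]; use x in auto)+
    have xc: "x \<in> carrier G" and rc: "r \<in> carrier G"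
      using x(1) r(1) subgroup.mem_carrier[OF H'] by auto
    have "x \<in> H #> r" using rcos_self[OF xc H] r by simp
    then obtain h where h: "h \<in> H" "x = h \<otimes> r" unfolding r_coset_def by auto
    have "h \<in> carrier G" using h(1) subgroup.mem_carrier[OF H] by auto
    then have "Y = (K #> h) #> r"
      using x(2) h(2) coset_mult_assoc[OF K _ rc] by simp
    then show "Y \<in> (\<lambda>(Z, R). Z #> rep R) ` ((\<lambda>h. K #> h) ` H \<times> (\<lambda>x. H #> x) ` H')"
      using h(1) x(1) unfolding r_def by (intro rev_image_eqI[of "(K #> h, H #> x)"]) auto
  qed
  have "finite ((\<lambda>h. K #> h) ` H \<times> (\<lambda>x. H #> x) ` H')"
    using KH HH' unfolding finite_index_in_def by simp
  then show ?thesis unfolding finite_index_in_def by (rule finite_subset[OF cover finite_imageI])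
qed

lemma finite_index_in_larger_subgroup:
  assumes N: "subgroup N G" and H: "subgroup H G" and "N \<subseteq> H" and L: "L \<subseteq> carrier G"
    and NL: "finite_index_in G N L"
  shows "finite_index_in G H L"
proof -
  have "H <#> N = H" using set_mult_subgroup_idem[OF H subgroup_incl[OF N H \<open>N \<subseteq> H\<close>]] .
  then have "H #> x = H <#> (N #> x)" if "x \<in> carrier G" for x
    using setmult_rcos_assoc[OF _ _ that] H N subgroup.subset by metis
  then have "(\<lambda>x. H #> x) ` L = (\<lambda>Z. H <#> Z) ` ((\<lambda>x. N #> x) ` L)"
    using L unfolding image_image by (intro image_cong) auto
  moreover have "finite ((\<lambda>Z. H <#> Z) ` ((\<lambda>x. N #> x) ` L))"
    using NL unfolding finite_index_in_def by (rule finite_imageI)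
  ultimately show ?thesis unfolding finite_index_in_def by (simp only:)
qed

lemma conj_image: "g <# H #> inv g = (\<lambda>h. g \<otimes> h \<otimes> inv g) ` H"
  unfolding l_coset_def r_coset_def by auto

lemma conj_conj:
  assumes "H \<subseteq> carrier G" "g \<in> carrier G" "a \<in> carrier G"
  shows "g <# (a <# H #> inv a) #> inv g = (g \<otimes> a) <# H #> inv (g \<otimes> a)"
proof -
  have "g <# (a <# H #> inv a) #> inv g = (\<lambda>h. g \<otimes> (a \<otimes> h \<otimes> inv a) \<otimes> inv g) ` H"
    by (simp add: conj_image image_image)
  also have "\<dots> = (\<lambda>h. (g \<otimes> a) \<otimes> h \<otimes> inv (g \<otimes> a)) ` H"
    using assms by (intro image_cong) (auto simp: m_assoc inv_mult_group)
  finally show ?thesis by (simp only: conj_image)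
qed

lemma finite_index_in_conj:
  assumes K: "K \<subseteq> carrier G" and H: "H \<subseteq> carrier G" and g: "g \<in> carrier G"
    and KH: "finite_index_in G K H"
  shows "finite_index_in G (g <# K #> inv g) (g <# H #> inv g)"
proof -
  have "(g <# K #> inv g) #> (g \<otimes> h \<otimes> inv g) = (g <# (K #> h)) #> inv g" if "h \<in> H" for h
  proof -
    have h: "h \<in> carrier G" using that H by auto
    have "inv g \<otimes> (g \<otimes> h \<otimes> inv g) = h \<otimes> inv g" using g h by (simp add: m_assoc[symmetric])
    then have "(g <# K #> inv g) #> (g \<otimes> h \<otimes> inv g) = g <# K #> (h \<otimes> inv g)"
      using K g h by (simp add: coset_mult_assoc l_coset_subset_G)
    also have "\<dots> = g <# K #> h #> inv g"
      using K g h by (simp add: coset_mult_assoc l_coset_subset_G)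
    finally show ?thesis using K g h by (simp add: coset_assoc)
  qed
  then have "(\<lambda>h. (g <# K #> inv g) #> (g \<otimes> h \<otimes> inv g)) ` H = (\<lambda>h. g <# (K #> h) #> inv g) ` H"
    by (rule image_cong[OF refl])
  then have eq: "(\<lambda>x. (g <# K #> inv g) #> x) ` (g <# H #> inv g)
                   = (\<lambda>Z. g <# Z #> inv g) ` ((\<lambda>h. K #> h) ` H)"
    by (simp only: conj_image[of g H] image_image)
  show ?thesis
    using KH unfolding finite_index_in_def eq by (rule finite_imageI)
qed

lemma finite_index_in_Inter:
  assumes C: "finite C" "C \<noteq> {}" "\<And>A. A \<in> C \<Longrightarrow> subgroup A G"
    and H: "H \<subseteq> carrier G" and CH: "\<And>A. A \<in> C \<Longrightarrow> finite_index_in G A H"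
  shows "finite_index_in G (\<Inter>C) H"
proof -
  have Inter: "subgroup (\<Inter>C) G" using subgroups_Inter C by auto
  have mem_iff: "x \<in> A #> h \<longleftrightarrow> x \<in> carrier G \<and> x \<otimes> inv h \<in> A"
    if A: "subgroup A G" and h: "h \<in> carrier G" for A h x
  proof
    assume "x \<in> A #> h"
    then show "x \<in> carrier G \<and> x \<otimes> inv h \<in> A"
      using r_coset_subset_G[OF subgroup.subset[OF A] h] subgroup.rcos_module_imp[OF A is_group h]
      by auto
  qed (use subgroup.rcos_module_rev[OF A is_group h] in auto)
  have coset_Inter: "\<Inter>C #> h = \<Inter>((\<lambda>A. A #> h) ` C)" if h: "h \<in> H" for h
  proof -
    have hc: "h \<in> carrier G" using h H by auto
    have "x \<in> \<Inter>C #> h \<longleftrightarrow> (\<forall>A\<in>C. x \<in> carrier G \<and> x \<otimes> inv h \<in> A)" for x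
      using mem_iff[OF Inter hc] C(2) by auto
    then show ?thesis using mem_iff[OF C(3) hc] by auto
  qed
  have cover: "(\<lambda>h. \<Inter>C #> h) ` H \<subseteq> (\<lambda>\<phi>. \<Inter>(\<phi> ` C)) ` (\<Pi>\<^sub>E A\<in>C. (\<lambda>h. A #> h) ` H)"
  proof
    fix Y assume "Y \<in> (\<lambda>h. \<Inter>C #> h) ` H"
    then obtain h where h: "h \<in> H" "Y = \<Inter>C #> h" by auto
    then have "Y = \<Inter>(restrict (\<lambda>A. A #> h) C ` C)" using coset_Inter by simp
    moreover have "restrict (\<lambda>A. A #> h) C \<in> (\<Pi>\<^sub>E A\<in>C. (\<lambda>h. A #> h) ` H)" using h by auto
    ultimately show "Y \<in> (\<lambda>\<phi>. \<Inter>(\<phi> ` C)) ` (\<Pi>\<^sub>E A\<in>C. (\<lambda>h. A #> h) ` H)" by blast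
  qed
  have "finite (\<Pi>\<^sub>E A\<in>C. (\<lambda>h. A #> h) ` H)"
    using CH C(1) unfolding finite_index_in_def by (intro finite_PiE) auto
  then show ?thesis unfolding finite_index_in_def by (rule finite_subset[OF cover finite_imageI])
qed

end

definition conjugates :: "('a, 'b) monoid_scheme \<Rightarrow> 'a set \<Rightarrow> 'a set set" where
  "conjugates G H = (\<lambda>g. g <#\<^bsub>G\<^esub> H #>\<^bsub>G\<^esub> inv\<^bsub>G\<^esub> g) ` carrier G"

definition normal_core :: "('a, 'b) monoid_scheme \<Rightarrow> 'a set \<Rightarrow> 'a set" where
  "normal_core G H = \<Inter>(conjugates G H)"

definition normal_closure :: "('a, 'b) monoid_scheme \<Rightarrow> 'a set \<Rightarrow> 'a set" where
  "normal_closure G H = generate G (\<Union>(conjugates G H))"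

context group begin

lemma self_in_conjugates: "H \<subseteq> carrier G \<Longrightarrow> H \<in> conjugates G H"
  unfolding conjugates_def by (intro rev_image_eqI[of \<one>]) (auto simp: lcos_mult_one)

lemma conjugates_subset_carrier:
  "H \<subseteq> carrier G \<Longrightarrow> A \<in> conjugates G H \<Longrightarrow> A \<subseteq> carrier G"
  unfolding conjugates_def by (auto simp: conj_image)

lemma conjugates_subgroup: "subgroup H G \<Longrightarrow> A \<in> conjugates G H \<Longrightarrow> subgroup A G"
  unfolding conjugates_def using subgroup_conjugation_is_surj2 by auto

lemma conj_in_conjugates:
  assumes "H \<subseteq> carrier G" "A \<in> conjugates G H" "g \<in> carrier G"
  shows "g <# A #> inv g \<in> conjugates G H"
  using assms conj_conj unfolding conjugates_def by auto

lemma normal_core_subset: "H \<subseteq> carrier G \<Longrightarrow> normal_core G H \<subseteq> H"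
  unfolding normal_core_def using self_in_conjugates by auto

lemma normal_core_normal:
  assumes H: "subgroup H G" shows "normal_core G H \<lhd> G"
proof (rule normal_invI)
  have "conjugates G H \<noteq> {}" using self_in_conjugates[OF subgroup.subset[OF H]] by auto
  then show "subgroup (normal_core G H) G"
    unfolding normal_core_def using conjugates_subgroup[OF H] by (intro subgroups_Inter) auto
next
  fix x n assume x: "x \<in> carrier G" and n: "n \<in> normal_core G H"
  show "x \<otimes> n \<otimes> inv x \<in> normal_core G H" unfolding normal_core_def
  proof
    fix A assume A: "A \<in> conjugates G H"
    have Ac: "A \<subseteq> carrier G" using conjugates_subgroup[OF H A] subgroup.subset by auto
    have "inv x <# A #> inv (inv x) \<in> conjugates G H"
      using conj_in_conjugates[OF subgroup.subset[OF H] A inv_closed[OF x]] .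
    then have "n \<in> inv x <# A #> x" using n x unfolding normal_core_def by auto
    then have "x \<otimes> n \<otimes> inv x \<in> x <# (inv x <# A #> x) #> inv x" by (auto simp: conj_image)
    then show "x \<otimes> n \<otimes> inv x \<in> A" using subgroup_conjugation_is_surj0[OF x Ac] by simp
  qed
qed

lemma normal_closure_normal:
  assumes "H \<subseteq> carrier G" shows "normal_closure G H \<lhd> G"
  unfolding normal_closure_def
proof (rule normal_generateI)
  show "\<Union>(conjugates G H) \<subseteq> carrier G" using conjugates_subset_carrier[OF assms] by blast
  fix h g assume "h \<in> \<Union>(conjugates G H)" and g: "g \<in> carrier G"
  then obtain A where "A \<in> conjugates G H" "h \<in> A" by auto
  then show "g \<otimes> h \<otimes> inv g \<in> \<Union>(conjugates G H)"
    using conj_in_conjugates[OF assms _ g] by (auto simp: conj_image)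
qed

lemma subset_normal_closure:
  assumes "H \<subseteq> carrier G" shows "H \<subseteq> normal_closure G H"
proof
  fix h assume "h \<in> H"
  then have "h \<in> \<Union>(conjugates G H)" using self_in_conjugates[OF assms] by blast
  then show "h \<in> normal_closure G H" unfolding normal_closure_def by (rule generate.incl)
qed

lemma normal_conj_eq:
  assumes N: "N \<lhd> G" and g: "g \<in> carrier G" shows "g <# N #> inv g = N"
proof -
  have Nc: "N \<subseteq> carrier G" using normal_imp_subgroup[OF N] subgroup.subset by auto
  have "g <# N #> inv g = N #> g #> inv g" using normal.coset_eq[OF N] g by simp
  also have "\<dots> = N" using Nc g by (simp add: coset_mult_assoc)
  finally show ?thesis .
qed

lemma normalizer_normal:
  assumes "N \<lhd> G" shows "normalizer G N = carrier G"
proof -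
  have "N \<subseteq> carrier G" using normal_imp_subgroup[OF assms] subgroup.subset by auto
  then show ?thesis unfolding normalizer_def stabilizer_def using normal_conj_eq[OF assms] by auto
qed

text \<open>By the orbit-stabilizer correspondence for the conjugation action on subsets.\<close>
lemma finite_conjugates:
  assumes "H \<subseteq> carrier G" and "finite (rcosets (normalizer G H))"
  shows "finite (conjugates G H)"
proof -
  let ?\<phi> = "\<lambda>g. \<lambda>H \<in> {H. H \<subseteq> carrier G}. g <# H #> inv g"
  have orbit: "conjugates G H = orbit G ?\<phi> H"
    unfolding conjugates_def orbit_def using assms(1) by auto
  have stabilizer: "normalizer G H = stabilizer G ?\<phi> H" unfolding normalizer_def ..
  have bij: "bij_betw (\<lambda>R. ?\<phi> (inv (SOME h. h \<in> R)) H)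
                   (rcosets (stabilizer G ?\<phi> H)) (orbit G ?\<phi> H)"
    using group_action.orbit_stab_fun_is_bij[OF action_by_conjugation_on_power_set] assms(1) by auto
  show ?thesis
    unfolding orbit using bij_betw_finite[OF bij] assms(2)[unfolded stabilizer] by blast
qed

lemma torsion_of_finite_subgroup:
  assumes "subgroup B G" "finite B" "x \<in> B"
  shows "\<exists>n>0. x [^] (n::nat) = \<one>"
proof -
  have x: "x \<in> carrier G" using subgroup.mem_carrier[OF assms(1,3)] .
  have "carrier (subgroup_generated G {x}) \<subseteq> B"
    using assms x generate_subgroup_incl by (simp add: carrier_subgroup_generated)
  then have "finite (carrier (subgroup_generated G {x}))" using assms(2) by (rule finite_subset)
  then show ?thesis using finite_cyclic_subgroup[OF x] by blast
qed

lemma finite_index_in_normal_core: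
  assumes K: "subgroup K G" and fin: "finite (conjugates G K)"
    and M: "M \<lhd> G" and KM: "finite_index_in G K M"
  shows "finite_index_in G (normal_core G K) M"
  unfolding normal_core_def
proof (rule finite_index_in_Inter[OF fin])
  have Kc: "K \<subseteq> carrier G" and Mc: "M \<subseteq> carrier G"
    using K M subgroup.subset normal_imp_subgroup by auto
  show "conjugates G K \<noteq> {}" using self_in_conjugates[OF Kc] by auto
  show "subgroup A G" if "A \<in> conjugates G K" for A using conjugates_subgroup[OF K that] .
  show "M \<subseteq> carrier G" by (rule Mc)
  show "finite_index_in G A M" if A: "A \<in> conjugates G K" for A
  proof -
    obtain g where g: "g \<in> carrier G" "A = g <# K #> inv g" using A unfolding conjugates_def by auto
    show ?thesis using finite_index_in_conj[OF Kc Mc g(1) KM] normal_conj_eq[OF M g(1)] g(2) by simp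
  qed
qed

lemma finite_index_in_normal_closure:
  assumes H: "subgroup H G" and fin: "finite (conjugates G H)"
    and N: "N \<lhd> G" and "N \<subseteq> H" and NH: "finite_index_in G N H"
  shows "finite_index_in G H (normal_closure G H)"
proof -
  interpret N: normal N G by (rule N)
  let ?Q = "G Mod N" and ?\<pi> = "\<lambda>x. N #> x"
  interpret \<pi>: group_hom G ?Q ?\<pi>
    using N.factorgroup_is_group N.r_coset_hom_Mod by (simp add: group_hom_def group_hom_axioms_def is_group)
  have Q: "group ?Q" by (rule N.factorgroup_is_group)
  have Hc: "H \<subseteq> carrier G" and Nc: "N \<subseteq> carrier G" using H N.subgroup_axioms subgroup.subset by auto
  define S where "S = \<Union>(conjugates G H)"
  have Sc: "S \<subseteq> carrier G" using conjugates_subset_carrier[OF Hc] unfolding S_def by blast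
  have fin_img: "finite (?\<pi> ` A)" if A: "A \<in> conjugates G H" for A
  proof -
    obtain g where g: "g \<in> carrier G" "A = g <# H #> inv g" using A unfolding conjugates_def by auto
    show ?thesis using finite_index_in_conj[OF Nc Hc g(1) NH] normal_conj_eq[OF N g(1)] g(2)
      unfolding finite_index_in_def by simp
  qed
  have "finite (generate ?Q (?\<pi> ` S))"
  proof (rule group.dietzmann[OF Q])
    show "?\<pi> ` S \<subseteq> carrier ?Q" using Sc by auto
    show "finite (?\<pi> ` S)" unfolding S_def image_Union using fin fin_img by auto
  next
    fix s assume "s \<in> ?\<pi> ` S"
    then obtain A a where A: "A \<in> conjugates G H" "a \<in> A" "s = ?\<pi> a" unfolding S_def by auto
    have "subgroup (?\<pi> ` A) ?Q" using \<pi>.subgroup_img_is_subgroup[OF conjugates_subgroup[OF H A(1)]] .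
    then show "\<exists>n>0. s [^]\<^bsub>?Q\<^esub> (n::nat) = \<one>\<^bsub>?Q\<^esub>"
      using group.torsion_of_finite_subgroup[OF Q _ fin_img[OF A(1)]] A by blast
  next
    fix z s assume "z \<in> carrier ?Q" "s \<in> ?\<pi> ` S"
    then obtain g A a where g: "g \<in> carrier G" "z = ?\<pi> g"
      and A: "A \<in> conjugates G H" "a \<in> A" "s = ?\<pi> a"
      unfolding S_def carrier_FactGroup by auto
    have a: "a \<in> carrier G" using conjugates_subset_carrier[OF Hc A(1)] A(2) by auto
    have "g \<otimes> a \<otimes> inv g \<in> S"
      using conj_in_conjugates[OF Hc A(1) g(1)] A(2) unfolding S_def by (auto simp: conj_image)
    moreover have "z \<otimes>\<^bsub>?Q\<^esub> s \<otimes>\<^bsub>?Q\<^esub> inv\<^bsub>?Q\<^esub> z = ?\<pi> (g \<otimes> a \<otimes> inv g)"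
      using g A(3) a by simp
    ultimately show "z \<otimes>\<^bsub>?Q\<^esub> s \<otimes>\<^bsub>?Q\<^esub> inv\<^bsub>?Q\<^esub> z \<in> ?\<pi> ` S" by simp
  qed
  then have "finite_index_in G N (normal_closure G H)"
    unfolding finite_index_in_def normal_closure_def S_def[symmetric] using \<pi>.generate_img[OF Sc] by simp
  moreover have "normal_closure G H \<subseteq> carrier G"
    using normal_closure_normal[OF Hc] normal_imp_subgroup subgroup.subset by blast
  ultimately show ?thesis
    using finite_index_in_larger_subgroup[OF N.subgroup_axioms H \<open>N \<subseteq> H\<close>] by blast
qed

end

lemma topspace_topological_group: "topological_group G T \<Longrightarrow> topspace T = carrier G"
  unfolding topological_group_def by auto

lemma continuous_map_right_mult:
  assumes TG: "topological_group G T" and c: "c \<in> carrier G"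
  shows "continuous_map T T (\<lambda>x. x \<otimes>\<^bsub>G\<^esub> c)"
proof -
  have mult: "continuous_map (prod_topology T T) T (\<lambda>(x, y). x \<otimes>\<^bsub>G\<^esub> y)"
    using TG unfolding topological_group_def by auto
  have "continuous_map T (prod_topology T T) (\<lambda>x. (x, c))"
    using c topspace_topological_group[OF TG] by (simp add: continuous_map_pairwise o_def)
  from continuous_map_compose[OF this mult] show ?thesis by (simp add: o_def)
qed

context group begin

lemma rcos_eq_preimage:
  assumes H: "subgroup H G" and c: "c \<in> carrier G"
  shows "H #> c = {x \<in> carrier G. x \<otimes> inv c \<in> H}"
  using subgroup.rcos_module[OF H is_group c] r_coset_subset_G[OF subgroup.subset[OF H] c] by blast

lemma closedin_rcos:
  assumes TG: "topological_group G T" and H: "subgroup H G" "closedin T H" and c: "c \<in> carrier G"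
  shows "closedin T (H #> c)"
  unfolding rcos_eq_preimage[OF H(1) c] topspace_topological_group[OF TG, symmetric]
  by (rule closedin_continuous_map_preimage[OF continuous_map_right_mult[OF TG] H(2)]) (use c in simp)

lemma openin_rcos:
  assumes TG: "topological_group G T" and H: "subgroup H G" "openin T H" and c: "c \<in> carrier G"
  shows "openin T (H #> c)"
  unfolding rcos_eq_preimage[OF H(1) c] topspace_topological_group[OF TG, symmetric]
  by (rule openin_continuous_map_preimage[OF continuous_map_right_mult[OF TG] H(2)]) (use c in simp)

text \<open>The cosets of an open subgroup form an open partition of a compact space.\<close>
lemma finite_rcosets_openin:
  assumes TG: "topological_group G T" and cpt: "compact_space T"
    and M: "subgroup M G" "openin T M"
  shows "finite (rcosets M)"
proof -
  have top: "topspace T = carrier G" by (rule topspace_topological_group[OF TG])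
  have "\<forall>U\<in>rcosets M. openin T U" using openin_rcos[OF TG M] unfolding RCOSETS_def by auto
  moreover have "topspace T \<subseteq> \<Union>(rcosets M)"
    using rcos_self[OF _ M(1)] top unfolding RCOSETS_def by auto
  ultimately obtain F where F: "finite F" "F \<subseteq> rcosets M" "topspace T \<subseteq> \<Union>F"
    using cpt unfolding compact_space_alt by meson
  have "rcosets M \<subseteq> F"
  proof
    fix A assume "A \<in> rcosets M"
    then obtain x where x: "x \<in> carrier G" "A = M #> x" unfolding RCOSETS_def by auto
    then obtain B where B: "B \<in> F" "x \<in> B" using F(3) top by auto
    then obtain y where y: "y \<in> carrier G" "B = M #> y" using F(2) unfolding RCOSETS_def by auto
    have "M #> y = M #> x" using repr_independence[OF _ y(1) M(1)] B y by simp
    then show "A \<in> F" using x y B by simp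
  qed
  then show ?thesis using F(1) by (rule finite_subset)
qed

lemma closedin_finite_index_overgroup:
  assumes TG: "topological_group G T" and H: "subgroup H G" "closedin T H"
    and L: "subgroup L G" and "H \<subseteq> L" and HL: "finite_index_in G H L"
  shows "closedin T L"
proof -
  have "L = \<Union>((\<lambda>x. H #> x) ` L)"
  proof
    show "L \<subseteq> \<Union>((\<lambda>x. H #> x) ` L)" using rcos_self[OF _ H(1)] subgroup.mem_carrier[OF L] by blast
    show "\<Union>((\<lambda>x. H #> x) ` L) \<subseteq> L"
      using subgroup.m_closed[OF L] \<open>H \<subseteq> L\<close> unfolding r_coset_def by auto
  qed
  moreover have "closedin T (\<Union>((\<lambda>x. H #> x) ` L))"
    using HL closedin_rcos[OF TG H] subgroup.mem_carrier[OF L] unfolding finite_index_in_def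
    by (intro closedin_Union) auto
  ultimately show ?thesis by simp
qed

lemma orbital_finite_conjugates:
  assumes TG: "topological_group G T" and cpt: "compact_space T" and K: "orbital G T K"
  shows "finite (conjugates G K)"
proof -
  have "subgroup K G" "openin T (normalizer G K)"
    using K unfolding orbital_def closed_subgroup_def by auto
  moreover from this have "subgroup (normalizer G K) G"
    using normalizer_imp_subgroup subgroup.subset by blast
  ultimately show ?thesis
    using finite_conjugates finite_rcosets_openin[OF TG cpt] subgroup.subset by blast
qed

lemma closed_normal_imp_orbital:
  assumes "topological_group G T" and "N \<lhd> G" and "closedin T N"
  shows "orbital G T N"
  using assms normal_imp_subgroup openin_topspace[of T] topspace_topological_group[OF assms(1)]
  unfolding orbital_def closed_subgroup_def normalizer_normal[OF assms(2)] by auto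

text \<open>Isolation of a maximal member comes from transitivity of finite index.\<close>
lemma exists_isolated_orbital_overgroup:
  assumes mx: "max_closed_subgroups G T" and K: "orbital G T K"
  shows "\<exists>M. isolated_orbital G T M \<and> K \<subseteq> M \<and> finite_index_in G K M"
proof -
  have Ksub: "subgroup K G" using K unfolding orbital_def closed_subgroup_def by auto
  define \<F> where "\<F> = {H. orbital G T H \<and> K \<subseteq> H \<and> finite_index_in G K H}"
  have "K \<in> \<F>" unfolding \<F>_def using K finite_index_in_refl[OF Ksub] by auto
  moreover have "\<forall>H\<in>\<F>. closed_subgroup G T H" unfolding \<F>_def orbital_def by auto
  ultimately obtain M where M: "M \<in> \<F>" and maximal: "\<And>H. H \<in> \<F> \<Longrightarrow> M \<subseteq> H \<Longrightarrow> H = M"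
    using mx unfolding max_closed_subgroups_def by (metis empty_iff)
  have Mo: "orbital G T M" and "K \<subseteq> M" and KM: "finite_index_in G K M"
    using M unfolding \<F>_def by auto
  have "\<not> finite_index_in G M H'" if H': "orbital G T H'" "M \<subset> H'" for H'
  proof
    assume "finite_index_in G M H'"
    then have "finite_index_in G K H'"
      using finite_index_in_trans[OF subgroup.subset[OF Ksub] _ _ KM] H' Mo
      unfolding orbital_def closed_subgroup_def by auto
    then have "H' \<in> \<F>" unfolding \<F>_def using H' \<open>K \<subseteq> M\<close> by auto
    then show False using maximal H'(2) by auto
  qed
  then have "isolated_orbital G T M" unfolding isolated_orbital_def using Mo by blast
  then show ?thesis using \<open>K \<subseteq> M\<close> KM by blast
qed

lemma orbital_normal_subgroup_of_finite_index:
  assumes TG: "topological_group G T" and cpt: "compact_space T" and mx: "max_closed_subgroups G T"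
    and iso: "\<And>H. isolated_orbital G T H \<Longrightarrow> H \<lhd> G" and K: "orbital G T K"
  shows "\<exists>N. N \<subseteq> K \<and> subgroup N G \<and> finite_index_in G N K \<and> N \<lhd> G"
proof -
  have Ksub: "subgroup K G" using K unfolding orbital_def closed_subgroup_def by auto
  obtain M where M: "isolated_orbital G T M" and "K \<subseteq> M" and KM: "finite_index_in G K M"
    using exists_isolated_orbital_overgroup[OF mx K] by blast
  have "finite_index_in G (normal_core G K) M"
    using finite_index_in_normal_core[OF Ksub orbital_finite_conjugates[OF TG cpt K] iso[OF M] KM] .
  then have "finite_index_in G (normal_core G K) K" using \<open>K \<subseteq> M\<close> by (rule finite_index_in_subset)
  moreover have "normal_core G K \<lhd> G" by (rule normal_core_normal[OF Ksub])
  ultimately show ?thesis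
    using normal_core_subset[OF subgroup.subset[OF Ksub]] normal_imp_subgroup by blast
qed

lemma isolated_orbital_normal:
  assumes TG: "topological_group G T" and cpt: "compact_space T"
    and fi: "\<And>K. orbital G T K \<Longrightarrow> \<exists>N. N \<subseteq> K \<and> subgroup N G \<and> finite_index_in G N K \<and> N \<lhd> G"
    and H: "isolated_orbital G T H"
  shows "H \<lhd> G"
proof -
  have Ho: "orbital G T H" using H unfolding isolated_orbital_def by auto
  then have Hsub: "subgroup H G" and Hcl: "closedin T H"
    unfolding orbital_def closed_subgroup_def by auto
  have Hc: "H \<subseteq> carrier G" using Hsub subgroup.subset by auto
  obtain N where "N \<subseteq> H" "finite_index_in G N H" "N \<lhd> G" using fi[OF Ho] by blast
  then have HL: "finite_index_in G H (normal_closure G H)"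
    using finite_index_in_normal_closure[OF Hsub orbital_finite_conjugates[OF TG cpt Ho]] by blast
  have L: "normal_closure G H \<lhd> G" by (rule normal_closure_normal[OF Hc])
  have HsubL: "H \<subseteq> normal_closure G H" by (rule subset_normal_closure[OF Hc])
  have "closedin T (normal_closure G H)"
    using closedin_finite_index_overgroup[OF TG Hsub Hcl normal_imp_subgroup[OF L] HsubL HL] .
  then have "orbital G T (normal_closure G H)" using closed_normal_imp_orbital[OF TG L] by blast
  then have "H = normal_closure G H" using H HL HsubL unfolding isolated_orbital_def by blast
  then show ?thesis using L by simp
qed

end

theorem lemma1p13:
  fixes G :: "('a, 'b) monoid_scheme" and T :: "'a topology"
  assumes "profinite_group G T"
    and "max_closed_subgroups G T"
  shows "(\<forall>H. isolated_orbital G T H \<longrightarrow> H \<lhd> G) \<longleftrightarrow>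
         (\<forall>K. orbital G T K \<longrightarrow>
              (\<exists>N. N \<subseteq> K \<and> subgroup N G \<and> finite_index_in G N K \<and> N \<lhd> G))"
proof -
  have TG: "topological_group G T" and cpt: "compact_space T"
    using assms(1) unfolding profinite_group_def by auto
  interpret group G using TG unfolding topological_group_def by auto
  show ?thesis
    using orbital_normal_subgroup_of_finite_index[OF TG cpt assms(2)]
      isolated_orbital_normal[OF TG cpt] by blast
qed

end
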